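(* $\widetilde{\mathbb{K}}_{sm}$ is a Gelfand ring: for all $a,b\in\widetilde{\mathbb{K}}_{sm}$ with $a+b=1$ there exist $r,s\in\widetilde{\mathbb{K}}_{sm}$ such that $(1+ar)(1+bs)=0$.
   Context: Let $I=(0,1]$ and $\mathbb{K}\in\{\mathbb{R},\mathbb{C}\}$. $\mathcal{E}_{M,sm}$ is the set of nets $(r_\varepsilon)_{\varepsilon\in I}\in\mathbb{K}^I$ with $\varepsilon\mapsto r_\varepsilon$ smooth on $I$ and $|r_\varepsilon|=O(\varepsilon^{-N})$ as $\varepsilon\to0$ for some $N\in\mathbb{N}$; $\mathcal{N}_{sm}$ is the set of smooth nets with $|r_\varepsilon|=O(\varepsilon^m)$ for all $m\in\mathbb{N}$; $\widetilde{\mathbb{K}}_{sm}=\mathcal{E}_{M,sm}/\mathcal{N}_{sm}$. *)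

theory Defs
  imports "HOL-Analysis.Analysis"
begin

abbreviation Iset :: "real set" where "Iset \<equiv> {0<..1}"

definition smooth_on_I :: "(real \<Rightarrow> 'a::real_normed_vector) \<Rightarrow> bool" where
  "smooth_on_I r \<longleftrightarrow> (\<exists>D :: nat \<Rightarrow> real \<Rightarrow> 'a.
      (\<forall>x\<in>Iset. D 0 x = r x) \<and>
      (\<forall>k. \<forall>x\<in>Iset. (D k has_vector_derivative D (Suc k) x) (at x within Iset)))"

definition E_M_sm :: "(real \<Rightarrow> 'a::real_normed_vector) set" where
  "E_M_sm = {r. smooth_on_I r \<and>
      (\<exists>N::nat. \<exists>C \<epsilon>0. \<epsilon>0 > 0 \<and> (\<forall>\<epsilon>. 0 < \<epsilon> \<and> \<epsilon> \<le> \<epsilon>0 \<and> \<epsilon> \<le> 1 \<longrightarrow> norm (r \<epsilon>) \<le> C / \<epsilon> ^ N))}"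

definition N_sm :: "(real \<Rightarrow> 'a::real_normed_vector) set" where
  "N_sm = {r. smooth_on_I r \<and>
      (\<forall>m::nat. \<exists>C \<epsilon>0. \<epsilon>0 > 0 \<and> (\<forall>\<epsilon>. 0 < \<epsilon> \<and> \<epsilon> \<le> \<epsilon>0 \<and> \<epsilon> \<le> 1 \<longrightarrow> norm (r \<epsilon>) \<le> C * \<epsilon> ^ m))}"

end

theory Submission
  imports Defs "HOL-Computational_Algebra.Polynomial"
begin

text \<open>Take smooth cutoffs \<open>\<phi>, \<psi>\<close> of \<open>\<parallel>a\<parallel>\<close> with \<open>\<phi> = 1\<close> where \<open>\<parallel>a\<parallel> \<ge> 0.4\<close>, \<open>\<phi> = 0\<close> where
  \<open>\<parallel>a\<parallel> \<le> 0.3\<close>, \<open>\<psi> = 1\<close> where \<open>\<parallel>a\<parallel> \<ge> 0.6\<close>, \<open>\<psi> = 0\<close> where \<open>\<parallel>a\<parallel> \<le> 0.5\<close>, and put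
  \<open>r = - \<phi> / a\<close>, \<open>s = (\<psi> - 1) / (1 - a)\<close>; both are smooth and bounded. Where \<open>\<parallel>a\<parallel> \<ge> 0.4\<close> the
  factor \<open>1 + a r\<close> vanishes; elsewhere \<open>\<psi> = 0\<close>, so \<open>1 + b s = (1 - a - b) / (1 - a)\<close> with
  \<open>\<parallel>1 - a\<parallel> \<ge> 0.6\<close>. Hence the product is bounded by \<open>2 \<parallel>a + b - 1\<parallel>\<close> and is negligible.
  As \<open>\<parallel>a\<parallel>\<close> need not be smooth, the cutoffs interpolate \<open>0/1\<close> values smoothly along a grid of
  \<open>(0, 1]\<close> so fine that \<open>\<parallel>a\<parallel>\<close> oscillates little on each cell.\<close>

definition smooth_on :: "real set \<Rightarrow> (real \<Rightarrow> 'a::real_normed_vector) \<Rightarrow> bool" where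
  "smooth_on S f \<longleftrightarrow> (\<exists>D :: nat \<Rightarrow> real \<Rightarrow> 'a.
      (\<forall>x\<in>S. D 0 x = f x) \<and>
      (\<forall>k. \<forall>x\<in>S. (D k has_vector_derivative D (Suc k) x) (at x within S)))"

lemma smooth_on_I_iff: "smooth_on_I f \<longleftrightarrow> smooth_on {0<..1} f"
  by (simp add: smooth_on_I_def smooth_on_def)

lemma smooth_onE:
  assumes "smooth_on S f"
  obtains D where "\<forall>x\<in>S. D 0 x = f x"
    "\<forall>k. \<forall>x\<in>S. (D k has_vector_derivative D (Suc k) x) (at x within S)"
  using assms unfolding smooth_on_def by blast

lemma smooth_on_if_derivative_closed:
  assumes "f \<in> F"
    and closed: "\<And>h. h \<in> F \<Longrightarrow> \<exists>h'\<in>F. \<forall>x\<in>S. (h has_vector_derivative h' x) (at x within S)"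
  shows "smooth_on S f"
proof -
  obtain deriv where deriv: "deriv h \<in> F \<and> (\<forall>x\<in>S. (h has_vector_derivative deriv h x) (at x within S))"
    if "h \<in> F" for h
    using closed by metis
  define D where "D k = (deriv ^^ k) f" for k
  have "D k \<in> F" for k
    by (induct k) (auto simp: D_def assms(1) deriv)
  then show ?thesis
    unfolding smooth_on_def by (intro exI[of _ D]) (auto simp: D_def deriv)
qed

lemma smooth_on_cong:
  "smooth_on S f \<Longrightarrow> (\<And>x. x \<in> S \<Longrightarrow> f x = g x) \<Longrightarrow> smooth_on S g"
  unfolding smooth_on_def by auto

lemma smooth_on_subset:
  assumes "smooth_on S f" "T \<subseteq> S"
  shows "smooth_on T f"
proof -
  obtain D where "\<forall>x\<in>S. D 0 x = f x"
    "\<forall>k. \<forall>x\<in>S. (D k has_vector_derivative D (Suc k) x) (at x within S)"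
    using assms(1) by (rule smooth_onE)
  then show ?thesis
    unfolding smooth_on_def using assms(2)
    by (intro exI[of _ D]) (blast intro: has_vector_derivative_within_subset)
qed

lemma smooth_on_imp_continuous_on:
  assumes "smooth_on S f"
  shows "continuous_on S f"
proof -
  obtain D where D: "\<forall>x\<in>S. D 0 x = f x"
    "\<forall>k. \<forall>x\<in>S. (D k has_vector_derivative D (Suc k) x) (at x within S)"
    using assms by (rule smooth_onE)
  have "continuous_on S (D 0)"
    using D(2) by (blast intro: continuous_on_vector_derivative)
  then show ?thesis
    using D(1) by (simp cong: continuous_on_cong)
qed

text \<open>The derivatives of two smooth functions generate a ring closed under differentiation,
  so every ring expression in the two functions is smooth.\<close>

inductive_set ring_closure :: "(real \<Rightarrow> 'a::real_normed_field) set \<Rightarrow> (real \<Rightarrow> 'a) set"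
  for G where
  generator: "g \<in> G \<Longrightarrow> g \<in> ring_closure G"
| const: "(\<lambda>x. c) \<in> ring_closure G"
| add: "f \<in> ring_closure G \<Longrightarrow> g \<in> ring_closure G \<Longrightarrow> (\<lambda>x. f x + g x) \<in> ring_closure G"
| mult: "f \<in> ring_closure G \<Longrightarrow> g \<in> ring_closure G \<Longrightarrow> (\<lambda>x. f x * g x) \<in> ring_closure G"

lemma ring_closure_derivative_closed:
  assumes G: "\<And>g. g \<in> G \<Longrightarrow> \<exists>g'\<in>ring_closure G. \<forall>x\<in>S. (g has_vector_derivative g' x) (at x within S)"
    and "h \<in> ring_closure G"
  shows "\<exists>h'\<in>ring_closure G. \<forall>x\<in>S. (h has_vector_derivative h' x) (at x within S)"
  using assms(2)
proof induct
  case (generator g)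
  then show ?case using G by blast
next
  case (const c)
  show ?case
    by (intro bexI[of _ "\<lambda>x. 0"]) (auto intro: ring_closure.const)
next
  case (add f g)
  then obtain f' g' where "f' \<in> ring_closure G" "g' \<in> ring_closure G"
    "\<forall>x\<in>S. (f has_vector_derivative f' x) (at x within S)"
    "\<forall>x\<in>S. (g has_vector_derivative g' x) (at x within S)" by blast
  then show ?case
    by (intro bexI[of _ "\<lambda>x. f' x + g' x"])
      (auto intro: ring_closure.add has_vector_derivative_add)
next
  case (mult f g)
  then obtain f' g' where "f' \<in> ring_closure G" "g' \<in> ring_closure G"
    "\<forall>x\<in>S. (f has_vector_derivative f' x) (at x within S)"
    "\<forall>x\<in>S. (g has_vector_derivative g' x) (at x within S)" by blast
  then show ?case
    by (intro bexI[of _ "\<lambda>x. f x * g' x + f' x * g x"])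
      (auto intro!: ring_closure.add ring_closure.mult mult has_vector_derivative_mult)
qed

lemma smooth_on_ring_closure:
  assumes "\<And>g. g \<in> G \<Longrightarrow> \<exists>g'\<in>ring_closure G. \<forall>x\<in>S. (g has_vector_derivative g' x) (at x within S)"
    and "h \<in> ring_closure G"
  shows "smooth_on S h"
  using assms(2) by (rule smooth_on_if_derivative_closed) (rule ring_closure_derivative_closed[OF assms(1)])

lemma derivative_sequence_in_ring_closure:
  assumes "\<forall>k. \<forall>x\<in>S. (D k has_vector_derivative D (Suc k) x) (at x within S)"
    and "range D \<subseteq> G" "g \<in> range D"
  shows "\<exists>g'\<in>ring_closure G. \<forall>x\<in>S. (g has_vector_derivative g' x) (at x within S)"
  using assms by (auto intro!: bexI[of _ "D (Suc _)"] ring_closure.generator)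

lemma smooth_on_binop:
  fixes f g :: "real \<Rightarrow> 'a::real_normed_field"
  assumes "smooth_on S f" "smooth_on S g"
    and op: "\<And>G u v. u \<in> G \<Longrightarrow> v \<in> G \<Longrightarrow> (\<lambda>x. op (u x) (v x)) \<in> ring_closure G"
  shows "smooth_on S (\<lambda>x. op (f x) (g x))"
proof -
  obtain D where D: "\<forall>x\<in>S. D 0 x = f x"
    "\<forall>k. \<forall>x\<in>S. (D k has_vector_derivative D (Suc k) x) (at x within S)"
    using assms(1) by (rule smooth_onE)
  obtain E where E: "\<forall>x\<in>S. E 0 x = g x"
    "\<forall>k. \<forall>x\<in>S. (E k has_vector_derivative E (Suc k) x) (at x within S)"
    using assms(2) by (rule smooth_onE)
  have "smooth_on S (\<lambda>x. op (D 0 x) (E 0 x))"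
  proof (rule smooth_on_ring_closure[of "range D \<union> range E"])
    fix h assume "h \<in> range D \<union> range E"
    then show "\<exists>h'\<in>ring_closure (range D \<union> range E). \<forall>x\<in>S. (h has_vector_derivative h' x) (at x within S)"
    proof
      assume "h \<in> range D"
      then show ?thesis by (rule derivative_sequence_in_ring_closure[OF D(2), rotated]) simp
    next
      assume "h \<in> range E"
      then show ?thesis by (rule derivative_sequence_in_ring_closure[OF E(2), rotated]) simp
    qed
  qed (rule op; simp)
  then show ?thesis
    by (rule smooth_on_cong) (use D(1) E(1) in simp)
qed

lemma smooth_on_const: "smooth_on S (\<lambda>x. c :: 'a::real_normed_field)"
  by (rule smooth_on_ring_closure[of "{}"]) (auto intro: ring_closure.const)

lemma smooth_on_add:
  fixes f g :: "real \<Rightarrow> 'a::real_normed_field"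
  shows "smooth_on S f \<Longrightarrow> smooth_on S g \<Longrightarrow> smooth_on S (\<lambda>x. f x + g x)"
  by (rule smooth_on_binop[where op = "\<lambda>u v. u + v"]) (blast intro: ring_closure.add ring_closure.generator)+

lemma smooth_on_mult:
  fixes f g :: "real \<Rightarrow> 'a::real_normed_field"
  shows "smooth_on S f \<Longrightarrow> smooth_on S g \<Longrightarrow> smooth_on S (\<lambda>x. f x * g x)"
  by (rule smooth_on_binop[where op = "\<lambda>u v. u * v"]) (blast intro: ring_closure.mult ring_closure.generator)+

lemma smooth_on_diff:
  fixes f g :: "real \<Rightarrow> 'a::real_normed_field"
  assumes "smooth_on S f" "smooth_on S g"
  shows "smooth_on S (\<lambda>x. f x - g x)"
  using smooth_on_add[OF assms(1) smooth_on_mult[OF smooth_on_const assms(2)], of "-1"] by simp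

lemma smooth_on_minus:
  fixes f :: "real \<Rightarrow> 'a::real_normed_field"
  assumes "smooth_on S f"
  shows "smooth_on S (\<lambda>x. - f x)"
  using smooth_on_diff[OF smooth_on_const assms, of 0] by simp

lemma has_vector_derivative_inverse:
  fixes f :: "real \<Rightarrow> 'a::real_normed_field"
  assumes "(f has_vector_derivative f') (at x within S)" "f x \<noteq> 0"
  shows "((\<lambda>x. inverse (f x)) has_vector_derivative - (inverse (f x) * f' * inverse (f x)))
    (at x within S)"
  using has_derivative_compose[OF assms(1)[unfolded has_vector_derivative_def]
      has_derivative_inverse'[OF assms(2)]]
  unfolding has_vector_derivative_def by (simp add: scaleR_conv_of_real mult_ac)

lemma smooth_on_inverse:
  fixes f :: "real \<Rightarrow> 'a::real_normed_field"
  assumes "smooth_on S f" "\<And>x. x \<in> S \<Longrightarrow> f x \<noteq> 0"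
  shows "smooth_on S (\<lambda>x. inverse (f x))"
proof -
  obtain D where D: "\<forall>x\<in>S. D 0 x = f x"
    "\<forall>k. \<forall>x\<in>S. (D k has_vector_derivative D (Suc k) x) (at x within S)"
    using assms(1) by (rule smooth_onE)
  define G where "G = range D \<union> {\<lambda>x. inverse (D 0 x)}"
  have "smooth_on S (\<lambda>x. inverse (D 0 x))"
  proof (rule smooth_on_ring_closure[of G])
    fix g assume "g \<in> G"
    then consider "g \<in> range D" | "g = (\<lambda>x. inverse (D 0 x))"
      unfolding G_def by blast
    then show "\<exists>g'\<in>ring_closure G. \<forall>x\<in>S. (g has_vector_derivative g' x) (at x within S)"
    proof cases
      case 1
      then show ?thesis
        by (rule derivative_sequence_in_ring_closure[OF D(2), rotated]) (auto simp: G_def)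
    next
      case 2
      have "(g has_vector_derivative (-1) * (inverse (D 0 x) * (D 1 x * inverse (D 0 x))))
          (at x within S)" if "x \<in> S" for x
      proof -
        have "(D 0 has_vector_derivative D 1 x) (at x within S)"
          using D(2) that by simp
        moreover have "D 0 x \<noteq> 0"
          using assms(2) D(1) that by simp
        ultimately have "((\<lambda>x. inverse (D 0 x)) has_vector_derivative
            - (inverse (D 0 x) * D 1 x * inverse (D 0 x))) (at x within S)"
          by (rule has_vector_derivative_inverse)
        then show ?thesis
          unfolding 2 by (simp add: mult.assoc)
      qed
      moreover have "(\<lambda>x. (-1) * (inverse (D 0 x) * (D 1 x * inverse (D 0 x)))) \<in> ring_closure G"
        by (intro ring_closure.mult ring_closure.const ring_closure.generator) (auto simp: G_def)
      ultimately show ?thesis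
        by (intro bexI[of _ "\<lambda>x. (-1) * (inverse (D 0 x) * (D 1 x * inverse (D 0 x)))"]) simp_all
    qed
  qed (rule ring_closure.generator, simp add: G_def)
  then show ?thesis
    by (rule smooth_on_cong) (use D(1) in simp)
qed

lemma smooth_on_of_real:
  assumes "smooth_on S f"
  shows "smooth_on S (\<lambda>x. of_real (f x) :: 'a::real_normed_field)"
proof -
  obtain D where D: "\<forall>x\<in>S. D 0 x = f x"
    "\<forall>k. \<forall>x\<in>S. (D k has_vector_derivative D (Suc k) x) (at x within S)"
    using assms by (rule smooth_onE)
  have "((\<lambda>x. of_real (D k x) :: 'a) has_vector_derivative of_real (D (Suc k) x)) (at x within S)"
    if "x \<in> S" for k x
    using D(2) that
    by (intro has_vector_derivative_of_real) (simp add: has_real_derivative_iff_has_vector_derivative)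
  then show ?thesis
    unfolding smooth_on_def using D(1)
    by (intro exI[of _ "\<lambda>k x. of_real (D k x)"]) simp
qed

lemma smooth_on_compose_affine:
  assumes "smooth_on UNIV f"
  shows "smooth_on S (\<lambda>x. f (c * x + d))"
proof -
  obtain D where D: "\<forall>x. D 0 x = f x"
    "\<forall>k x. (D k has_vector_derivative D (Suc k) x) (at x)"
    using assms by (rule smooth_onE) simp
  have "((\<lambda>x. c ^ k *\<^sub>R D k (c * x + d)) has_vector_derivative
      c ^ Suc k *\<^sub>R D (Suc k) (c * x + d)) (at x within S)" for k x
  proof -
    have "((\<lambda>x. c * x + d) has_vector_derivative c) (at x within S)"
      by (auto intro!: derivative_eq_intros)
    moreover have "(D k has_vector_derivative D (Suc k) (c * x + d))
        (at (c * x + d) within (\<lambda>x. c * x + d) ` S)"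
      using D(2) has_vector_derivative_at_within by blast
    ultimately have "((D k \<circ> (\<lambda>x. c * x + d)) has_vector_derivative c *\<^sub>R D (Suc k) (c * x + d))
        (at x within S)"
      by (rule vector_diff_chain_within)
    from bounded_linear.has_vector_derivative[OF bounded_linear_scaleR_right this, of "c ^ k"]
    show ?thesis
      by (simp add: o_def mult.commute)
  qed
  then show ?thesis
    unfolding smooth_on_def using D(1)
    by (intro exI[of _ "\<lambda>k x. c ^ k *\<^sub>R D k (c * x + d)"]) simp
qed

text \<open>Smoothness is a local property wherever one-sided derivatives are unique.\<close>

lemma smooth_on_local:
  fixes f :: "real \<Rightarrow> 'a::real_normed_vector"
  assumes nontrivial: "\<And>x. x \<in> S \<Longrightarrow> at x within S \<noteq> bot"
    and local: "\<And>x. x \<in> S \<Longrightarrow> \<exists>U. open U \<and> x \<in> U \<and> smooth_on (U \<inter> S) f"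
  shows "smooth_on S f"
proof (rule smooth_on_if_derivative_closed)
  define F where "F = {h :: real \<Rightarrow> 'a. \<forall>x\<in>S. \<exists>U. open U \<and> x \<in> U \<and> smooth_on (U \<inter> S) h}"
  show "f \<in> F"
    unfolding F_def using local by blast
  fix h assume "h \<in> F"
  define h' where "h' x = vector_derivative h (at x within S)" for x
  have "\<exists>U. open U \<and> x \<in> U \<and> smooth_on (U \<inter> S) h' \<and> (h has_vector_derivative h' x) (at x within S)"
    if "x \<in> S" for x
  proof -
    obtain U where U: "open U" "x \<in> U" "smooth_on (U \<inter> S) h"
      using \<open>h \<in> F\<close> \<open>x \<in> S\<close> unfolding F_def by blast
    obtain D where D: "\<forall>y\<in>U \<inter> S. D 0 y = h y"
        "\<forall>k. \<forall>y\<in>U \<inter> S. (D k has_vector_derivative D (Suc k) y) (at y within U \<inter> S)"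
      using U(3) by (rule smooth_onE)
    have deriv: "(h has_vector_derivative D 1 y) (at y within S)" if "y \<in> U \<inter> S" for y
    proof -
      have D1: "(D 0 has_vector_derivative D 1 y) (at y within U \<inter> S)"
        using D(2) that by simp
      have "(h has_vector_derivative D 1 y) (at y within U \<inter> S)"
        by (rule has_vector_derivative_transform[OF that _ D1]) (use D(1) in simp)
      moreover have "at y within U \<inter> S = at y within S"
        using U(1) that by (intro at_within_nhd[of y U]) auto
      ultimately show ?thesis by simp
    qed
    have h': "h' y = D 1 y" if "y \<in> U \<inter> S" for y
      unfolding h'_def using that by (intro vector_derivative_within nontrivial deriv) auto
    have "smooth_on (U \<inter> S) (D 1)"
      unfolding smooth_on_def using D(2) by (intro exI[of _ "\<lambda>k. D (Suc k)"]) simp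
    then have "smooth_on (U \<inter> S) h'"
      by (rule smooth_on_cong) (simp add: h')
    moreover have "(h has_vector_derivative h' x) (at x within S)"
      using deriv[of x] h'[of x] U(2) that by simp
    ultimately show ?thesis
      using U(1,2) by blast
  qed
  then have "h' \<in> F" "\<forall>x\<in>S. (h has_vector_derivative h' x) (at x within S)"
    unfolding F_def by blast+
  then show "\<exists>h'\<in>F. \<forall>x\<in>S. (h has_vector_derivative h' x) (at x within S)"
    by blast
qed

lemma at_within_Ioc_nontrivial:
  fixes x a b :: real
  shows "a < b \<Longrightarrow> x \<in> {a<..b} \<Longrightarrow> at x within {a<..b} \<noteq> bot"
  by (simp add: trivial_limit_within)

definition exp_neg_inv :: "real \<Rightarrow> real" where
  "exp_neg_inv x = (if x > 0 then exp (- inverse x) else 0)"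

text \<open>The \<open>k\<close>-th derivative of \<open>exp (- 1/x)\<close> is \<open>P\<^sub>k (1/x) exp (- 1/x)\<close> on the positive axis;
  it is flat at \<open>0\<close> since \<open>exp (- t)\<close> beats every polynomial in \<open>t\<close>.\<close>

fun exp_neg_inv_poly :: "nat \<Rightarrow> real poly" where
  "exp_neg_inv_poly 0 = 1"
| "exp_neg_inv_poly (Suc k) = [:0, 0, 1:] * (exp_neg_inv_poly k - pderiv (exp_neg_inv_poly k))"

definition exp_neg_inv_deriv :: "nat \<Rightarrow> real \<Rightarrow> real" where
  "exp_neg_inv_deriv k x =
     (if x > 0 then poly (exp_neg_inv_poly k) (inverse x) * exp (- inverse x) else 0)"

lemma poly_times_exp_neg_tendsto_0: "((\<lambda>t. poly p t * exp (- t)) \<longlongrightarrow> (0::real)) at_top"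
proof -
  have "((\<lambda>t. \<Sum>i\<le>degree p. coeff p i * (t ^ i / exp t)) \<longlongrightarrow> (\<Sum>i\<le>degree p. coeff p i * 0)) at_top"
    by (intro tendsto_sum tendsto_mult tendsto_const tendsto_power_div_exp_0)
  moreover have "(\<lambda>t. \<Sum>i\<le>degree p. coeff p i * (t ^ i / exp t)) = (\<lambda>t. poly p t * exp (- t))"
    by (simp add: poly_altdef sum_distrib_right exp_minus divide_inverse mult.assoc)
  ultimately show ?thesis by simp
qed

lemma poly_inverse_times_exp_neg_inverse_over_tendsto_0:
  "((\<lambda>h. poly p (inverse h) * exp (- inverse h) / h) \<longlongrightarrow> (0::real)) (at_right 0)"
proof -
  have "((\<lambda>t. poly (pCons 0 p) t * exp (- t)) \<longlongrightarrow> (0::real)) at_top"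
    by (rule poly_times_exp_neg_tendsto_0)
  then show ?thesis
    by (simp add: filterlim_at_right_to_top divide_inverse mult_ac)
qed

lemma exp_neg_inv_deriv_has_derivative_pos:
  assumes "x > 0"
  shows "(exp_neg_inv_deriv k has_real_derivative exp_neg_inv_deriv (Suc k) x) (at x)"
proof -
  let ?P = "exp_neg_inv_poly k"
  have "((\<lambda>y. poly ?P (inverse y) * exp (- inverse y)) has_real_derivative
      poly (pderiv ?P) (inverse x) * (- inverse (x\<^sup>2)) * exp (- inverse x)
        + poly ?P (inverse x) * (exp (- inverse x) * inverse (x\<^sup>2))) (at x)"
    using assms
    by (auto intro!: derivative_eq_intros DERIV_chain2[OF poly_DERIV] simp: power2_eq_square)
  also have "poly (pderiv ?P) (inverse x) * (- inverse (x\<^sup>2)) * exp (- inverse x)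
        + poly ?P (inverse x) * (exp (- inverse x) * inverse (x\<^sup>2)) = exp_neg_inv_deriv (Suc k) x"
    using assms by (simp add: exp_neg_inv_deriv_def algebra_simps power2_eq_square power_inverse)
  finally show ?thesis
    by (rule has_field_derivative_transform_within_open[where S = "{0<..}"])
      (use assms in \<open>auto simp: exp_neg_inv_deriv_def\<close>)
qed

lemma exp_neg_inv_deriv_has_derivative_neg:
  assumes "x < 0"
  shows "(exp_neg_inv_deriv k has_real_derivative exp_neg_inv_deriv (Suc k) x) (at x)"
proof -
  have "((\<lambda>y. 0) has_real_derivative 0) (at x)"
    by simp
  then have "(exp_neg_inv_deriv k has_real_derivative 0) (at x)"
    by (rule has_field_derivative_transform_within_open[where S = "{..<0}"])
      (use assms in \<open>auto simp: exp_neg_inv_deriv_def\<close>)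
  then show ?thesis
    using assms by (simp add: exp_neg_inv_deriv_def)
qed

lemma exp_neg_inv_deriv_has_derivative_0:
  "(exp_neg_inv_deriv k has_real_derivative exp_neg_inv_deriv (Suc k) 0) (at 0)"
proof -
  let ?q = "\<lambda>h. (exp_neg_inv_deriv k (0 + h) - exp_neg_inv_deriv k 0) / h"
  have "(?q \<longlongrightarrow> 0) (at_right 0)"
    using poly_inverse_times_exp_neg_inverse_over_tendsto_0[of "exp_neg_inv_poly k"]
    by (rule Lim_transform_eventually)
      (rule eventually_mono[OF eventually_at_right_less], simp add: exp_neg_inv_deriv_def)
  moreover have "(?q \<longlongrightarrow> 0) (at_left 0)"
    by (rule Lim_transform_eventually[OF tendsto_const])
      (rule eventually_mono[OF eventually_at_left_real[of "-1"]], auto simp: exp_neg_inv_deriv_def)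
  ultimately have "(?q \<longlongrightarrow> 0) (at 0)"
    by (simp add: filterlim_at_split)
  then show ?thesis
    by (simp add: DERIV_def exp_neg_inv_deriv_def)
qed

lemma exp_neg_inv_deriv_has_derivative:
  "(exp_neg_inv_deriv k has_real_derivative exp_neg_inv_deriv (Suc k) x) (at x)"
  using exp_neg_inv_deriv_has_derivative_0 exp_neg_inv_deriv_has_derivative_pos
    exp_neg_inv_deriv_has_derivative_neg
  by (cases x "0::real" rule: linorder_cases) auto

lemma smooth_on_exp_neg_inv: "smooth_on UNIV exp_neg_inv"
  unfolding smooth_on_def
  using exp_neg_inv_deriv_has_derivative[unfolded has_real_derivative_iff_has_vector_derivative]
  by (intro exI[of _ exp_neg_inv_deriv]) (simp add: exp_neg_inv_deriv_def exp_neg_inv_def)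

lemma exp_neg_inv_nonneg: "0 \<le> exp_neg_inv x"
  by (simp add: exp_neg_inv_def)

lemma exp_neg_inv_pos: "x > 0 \<Longrightarrow> exp_neg_inv x > 0"
  by (simp add: exp_neg_inv_def)

lemma exp_neg_inv_eq_0: "x \<le> 0 \<Longrightarrow> exp_neg_inv x = 0"
  by (simp add: exp_neg_inv_def)

definition smooth_step :: "real \<Rightarrow> real" where
  "smooth_step t = exp_neg_inv (t - 1/3) / (exp_neg_inv (t - 1/3) + exp_neg_inv (2/3 - t))"

lemma smooth_step_denominator_pos: "exp_neg_inv (t - 1/3) + exp_neg_inv (2/3 - t) > 0"
  using exp_neg_inv_pos[of "t - 1/3"] exp_neg_inv_pos[of "2/3 - t"]
    exp_neg_inv_nonneg[of "t - 1/3"] exp_neg_inv_nonneg[of "2/3 - t"]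
  by (cases "t > 1/3") auto

lemma smooth_step_eq_0: "t \<le> 1/3 \<Longrightarrow> smooth_step t = 0"
  by (simp add: smooth_step_def exp_neg_inv_eq_0)

lemma smooth_step_eq_1: "t \<ge> 2/3 \<Longrightarrow> smooth_step t = 1"
  using smooth_step_denominator_pos[of t] by (simp add: smooth_step_def exp_neg_inv_eq_0)

lemma smooth_step_bounds: "0 \<le> smooth_step t" "smooth_step t \<le> 1"
  using smooth_step_denominator_pos[of t] exp_neg_inv_nonneg[of "t - 1/3"]
    exp_neg_inv_nonneg[of "2/3 - t"]
  by (simp_all add: smooth_step_def divide_le_eq_1)

lemma smooth_on_smooth_step: "smooth_on UNIV smooth_step"
proof -
  have up: "smooth_on UNIV (\<lambda>t. exp_neg_inv (t - 1/3))"
    using smooth_on_compose_affine[OF smooth_on_exp_neg_inv, of UNIV 1 "-1/3"] by simp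
  have down: "smooth_on UNIV (\<lambda>t. exp_neg_inv (2/3 - t))"
    using smooth_on_compose_affine[OF smooth_on_exp_neg_inv, of UNIV "-1" "2/3"] by simp
  have "exp_neg_inv (t - 1/3) + exp_neg_inv (2/3 - t) \<noteq> 0" for t
    using smooth_step_denominator_pos[of t] by linarith
  then have "smooth_on UNIV (\<lambda>t. inverse (exp_neg_inv (t - 1/3) + exp_neg_inv (2/3 - t)))"
    by (intro smooth_on_inverse smooth_on_add[OF up down])
  from smooth_on_mult[OF up this] show ?thesis
    by (rule smooth_on_cong) (simp only: smooth_step_def divide_inverse)
qed

lemma convex_combination_in_unit_interval:
  fixes a b s :: real
  assumes "a \<in> {0..1}" "b \<in> {0..1}" "s \<in> {0..1}"
  shows "b + (a - b) * s \<in> {0..1}"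
proof -
  have "b + (a - b) * s = (1 - s) * b + s * a"
    by algebra
  moreover have "(1 - s) * b \<le> 1 - s" "s * a \<le> s"
    using assms by (simp_all add: mult_left_le)
  ultimately show ?thesis
    using assms by auto
qed

locale decreasing_grid =
  fixes xs :: "nat \<Rightarrow> real"
  assumes start: "xs 0 = 1"
    and decreasing: "xs (Suc i) < xs i"
    and exhausting: "x > 0 \<Longrightarrow> \<exists>i. xs i < x"
begin

lemma xs_antimono: "j \<le> i \<Longrightarrow> xs i \<le> xs j"
  using decreasing by (induct i) (auto simp: le_Suc_eq intro: order.trans[OF less_imp_le])

definition cell :: "real \<Rightarrow> nat" where
  "cell x = (LEAST i. xs (Suc i) < x)"

lemma cell_bounds:
  assumes "x \<in> {0<..1}"
  shows "xs (Suc (cell x)) < x" "x \<le> xs (cell x)"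
proof -
  obtain j where "xs j < x"
    using exhausting assms by auto
  with assms start have "\<exists>i. xs (Suc i) < x"
    by (cases j) auto
  then show "xs (Suc (cell x)) < x"
    unfolding cell_def by (rule LeastI_ex)
  show "x \<le> xs (cell x)"
  proof (cases "cell x")
    case 0
    then show ?thesis using assms start by simp
  next
    case (Suc j)
    then have "\<not> xs (Suc j) < x"
      unfolding cell_def by (metis lessI not_less_Least)
    then show ?thesis using Suc by simp
  qed
qed

lemma cell_eqI:
  assumes "xs (Suc i) < x" "x \<le> xs i"
  shows "cell x = i"
  unfolding cell_def
proof (rule Least_equality)
  show "xs (Suc i) < x" by (fact assms(1))
  fix j assume "xs (Suc j) < x"
  with assms(2) xs_antimono[of "Suc j" i] show "i \<le> j"
    by (cases "Suc j \<le> i") auto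
qed

definition piece :: "(nat \<Rightarrow> real) \<Rightarrow> nat \<Rightarrow> real \<Rightarrow> real" where
  "piece v i y = v (Suc i) + (v i - v (Suc i)) * smooth_step ((y - xs (Suc i)) / (xs i - xs (Suc i)))"

text \<open>Since \<open>smooth_step\<close> is flat near \<open>0\<close> and \<open>1\<close>, the interpolation is locally constant near
  each grid point, which is what makes it smooth.\<close>

definition interpolate :: "(nat \<Rightarrow> real) \<Rightarrow> real \<Rightarrow> real" where
  "interpolate v x = piece v (cell x) x"

lemma smooth_on_piece: "smooth_on UNIV (piece v i)"
proof -
  define L where "L = xs i - xs (Suc i)"
  have "smooth_on UNIV (\<lambda>y. smooth_step ((1 / L) * y + (- xs (Suc i) / L)))"
    by (rule smooth_on_compose_affine[OF smooth_on_smooth_step])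
  then have "smooth_on UNIV (\<lambda>y. v (Suc i) + (v i - v (Suc i)) * smooth_step ((1 / L) * y + (- xs (Suc i) / L)))"
    by (intro smooth_on_add smooth_on_mult smooth_on_const)
  then show ?thesis
    by (rule smooth_on_cong) (simp add: piece_def L_def diff_divide_distrib)
qed

lemma piece_eq_upper:
  assumes "xs (Suc i) + 2/3 * (xs i - xs (Suc i)) \<le> y"
  shows "piece v i y = v i"
proof -
  have "2/3 * (xs i - xs (Suc i)) \<le> y - xs (Suc i)"
    using assms by linarith
  then have "2/3 \<le> (y - xs (Suc i)) / (xs i - xs (Suc i))"
    using decreasing[of i] by (simp add: pos_le_divide_eq)
  then show ?thesis by (simp add: piece_def smooth_step_eq_1)
qed

lemma piece_eq_lower:
  assumes "y \<le> xs (Suc i) + 1/3 * (xs i - xs (Suc i))"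
  shows "piece v i y = v (Suc i)"
proof -
  have "y - xs (Suc i) \<le> 1/3 * (xs i - xs (Suc i))"
    using assms by linarith
  then have "(y - xs (Suc i)) / (xs i - xs (Suc i)) \<le> 1/3"
    using decreasing[of i] by (simp add: pos_divide_le_eq)
  then show ?thesis by (simp add: piece_def smooth_step_eq_0)
qed

definition upper_gap :: "nat \<Rightarrow> real" where
  "upper_gap i = (if i = 0 then 1 else xs (i - 1) - xs i)"

lemma upper_gap_pos: "upper_gap i > 0"
  using decreasing[of "i - 1"] by (cases i) (simp_all add: upper_gap_def)

lemma interpolate_near_grid_point:
  assumes "y \<in> {0<..1}" "xs (Suc i) + 2/3 * (xs i - xs (Suc i)) < y" "y < xs i + upper_gap i / 3"
  shows "interpolate v y = v i"
proof (cases "y \<le> xs i")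
  case True
  from assms(2) decreasing[of i] have "xs (Suc i) < y"
    by argo
  with True assms(2) show ?thesis
    by (simp add: interpolate_def cell_eqI piece_eq_upper)
next
  case False
  with assms(1) start obtain j where j: "i = Suc j"
    by (cases i) auto
  have lower: "y \<le> xs (Suc j) + 1/3 * (xs j - xs (Suc j))"
    using assms(3) by (simp add: j upper_gap_def)
  with decreasing[of j] have "y \<le> xs j"
    by argo
  with False have "cell y = j"
    by (intro cell_eqI) (simp_all add: j)
  with lower show ?thesis
    by (simp add: interpolate_def piece_eq_lower j)
qed

lemma interpolate_locally_smooth:
  assumes x: "x \<in> {0<..1}"
  shows "\<exists>U. open U \<and> x \<in> U \<and> smooth_on (U \<inter> {0<..1}) (interpolate v)"
proof -
  define i where "i = cell x"
  have lo: "xs (Suc i) < x" and hi: "x \<le> xs i"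
    using cell_bounds[OF x] by (simp_all add: i_def)
  show ?thesis
  proof (cases "x < xs i")
    case True
    let ?U = "{xs (Suc i)<..<xs i}"
    have "smooth_on (?U \<inter> {0<..1}) (piece v i)"
      by (rule smooth_on_subset[OF smooth_on_piece]) simp
    moreover have "cell y = i" if "y \<in> ?U" for y
      using that by (intro cell_eqI) auto
    ultimately have "smooth_on (?U \<inter> {0<..1}) (interpolate v)"
      by (rule_tac smooth_on_cong) (auto simp: interpolate_def)
    then show ?thesis
      using True lo by (intro exI[of _ ?U]) simp
  next
    case False
    let ?U = "{xs (Suc i) + 2/3 * (xs i - xs (Suc i))<..<xs i + upper_gap i / 3}"
    have "xs (Suc i) + 2/3 * (xs i - xs (Suc i)) < xs i"
      using decreasing[of i] by argo
    with False hi upper_gap_pos[of i] have "x \<in> ?U"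
      by auto
    moreover have "smooth_on (?U \<inter> {0<..1}) (interpolate v)"
    proof (rule smooth_on_cong[OF smooth_on_const[where c = "v i"]])
      fix y assume "y \<in> ?U \<inter> {0<..1}"
      then show "v i = interpolate v y"
        by (intro interpolate_near_grid_point[symmetric]) auto
    qed
    ultimately show ?thesis
      by (intro exI[of _ ?U]) simp
  qed
qed

lemma smooth_on_interpolate: "smooth_on {0<..1} (interpolate v)"
  by (intro smooth_on_local at_within_Ioc_nontrivial interpolate_locally_smooth) simp_all

lemma interpolate_eq_const:
  "v (cell x) = c \<Longrightarrow> v (Suc (cell x)) = c \<Longrightarrow> interpolate v x = c"
  by (simp add: interpolate_def piece_def)

lemma interpolate_bounds:
  assumes "\<And>i. v i \<in> {0..1}"
  shows "interpolate v x \<in> {0..1}"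
  unfolding interpolate_def piece_def
  using assms smooth_step_bounds by (intro convex_combination_in_unit_interval) auto

end

lemma sequence_with_uniform_steps_passes_below:
  fixes xs :: "nat \<Rightarrow> real"
  assumes "c > 0" and step: "\<And>i. x \<le> xs i \<Longrightarrow> xs (Suc i) \<le> xs i - c"
  shows "\<exists>i. xs i < x"
proof (rule ccontr)
  assume "\<nexists>i. xs i < x"
  then have above: "x \<le> xs i" for i
    by (simp add: not_less)
  have "xs i \<le> xs 0 - real i * c" for i
  proof (induct i)
    case (Suc i)
    then show ?case using step[OF above[of i]] by (simp add: algebra_simps)
  qed simp
  moreover obtain n where "xs 0 - x < real n * c"
    using reals_Archimedean3[OF \<open>c > 0\<close>] by blast
  ultimately show False
    using above[of n] by (smt (verit))
qed

definition dyadic_level :: "real \<Rightarrow> nat" where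
  "dyadic_level x = (LEAST k. (1/2::real)^k \<le> x/2)"

lemma dyadic_level_le:
  assumes "x > 0"
  shows "(1/2::real) ^ dyadic_level x \<le> x/2"
proof -
  obtain n where "(1/2::real)^n < x/2"
    using real_arch_pow_inv[of "x/2" "1/2"] assms by auto
  then show ?thesis
    unfolding dyadic_level_def by (intro LeastI less_imp_le)
qed

lemma dyadic_level_antimono: "0 < x \<Longrightarrow> x \<le> y \<Longrightarrow> dyadic_level y \<le> dyadic_level x"
  unfolding dyadic_level_def[of y] using dyadic_level_le[of x] by (intro Least_le) simp

text \<open>Each step from a grid point \<open>x\<close> is at most half the step size \<open>d k\<close> allotted to the dyadic
  interval \<open>[2\<^sup>-\<^sup>k, 1] \<supseteq> [x/2, 1]\<close>; only finitely many such \<open>d k\<close> occur above a positive bound, so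
  the steps do not shrink to zero and the grid exhausts \<open>(0, 1]\<close>.\<close>

definition grid_sequence :: "(nat \<Rightarrow> real) \<Rightarrow> nat \<Rightarrow> real" where
  "grid_sequence d i = ((\<lambda>x. max (x/2) (x - d (dyadic_level x) / 2)) ^^ i) 1"

lemma grid_sequence_Suc:
  "grid_sequence d (Suc i) =
     max (grid_sequence d i / 2) (grid_sequence d i - d (dyadic_level (grid_sequence d i)) / 2)"
  by (simp add: grid_sequence_def)

lemma grid_sequence_pos: "0 < grid_sequence d i"
  by (induct i) (simp_all add: grid_sequence_def)

lemma decreasing_grid_grid_sequence:
  assumes d_pos: "\<And>k. d k > 0"
  shows "decreasing_grid (grid_sequence d)"
proof
  show "grid_sequence d 0 = 1"
    by (simp add: grid_sequence_def)
  show "grid_sequence d (Suc i) < grid_sequence d i" for i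
    using grid_sequence_pos[of d i] d_pos by (simp add: grid_sequence_Suc)
  show "\<exists>i. grid_sequence d i < x" if "x > 0" for x
  proof -
    define m where "m = Min (d ` {..dyadic_level x})"
    have "m > 0"
      unfolding m_def using d_pos by (subst Min_gr_iff) auto
    moreover have "grid_sequence d (Suc i) \<le> grid_sequence d i - min (x/2) (m/2)"
      if "x \<le> grid_sequence d i" for i
    proof -
      have "dyadic_level (grid_sequence d i) \<le> dyadic_level x"
        using dyadic_level_antimono \<open>x > 0\<close> that by blast
      then have "m \<le> d (dyadic_level (grid_sequence d i))"
        unfolding m_def by (intro Min_le) auto
      then show ?thesis
        using that by (auto simp: grid_sequence_Suc)
    qed
    ultimately show ?thesis
      using \<open>x > 0\<close> by (intro sequence_with_uniform_steps_passes_below[of "min (x/2) (m/2)"]) auto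
  qed
qed

lemma uniform_continuity_moduli_dyadic:
  fixes g :: "real \<Rightarrow> real"
  assumes cont: "continuous_on {0<..1} g" and "\<eta> > 0"
  obtains d where "\<And>k. d k > 0"
    "\<And>k y z. y \<in> {(1/2::real)^k..1} \<Longrightarrow> z \<in> {(1/2::real)^k..1} \<Longrightarrow> \<bar>y - z\<bar> < d k
      \<Longrightarrow> \<bar>g y - g z\<bar> < \<eta>"
proof -
  have "\<exists>d>0. \<forall>y\<in>{(1/2::real)^k..1}. \<forall>z\<in>{(1/2::real)^k..1}. dist y z < d \<longrightarrow> dist (g y) (g z) < \<eta>"
    for k :: nat
  proof -
    have "(0::real) < (1/2)^k"
      by simp
    then have "{(1/2::real)^k..1} \<subseteq> {0<..1}"
      by (meson atLeastAtMost_iff greaterThanAtMost_iff less_le_trans subsetI)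
    then have "uniformly_continuous_on {(1/2::real)^k..1} g"
      by (intro compact_uniformly_continuous continuous_on_subset[OF cont]) simp_all
    then show ?thesis
      unfolding uniformly_continuous_on_def using \<open>\<eta> > 0\<close> by blast
  qed
  then show ?thesis
    using that unfolding dist_real_def by metis
qed

lemma fine_grid_exists:
  fixes g :: "real \<Rightarrow> real"
  assumes "continuous_on {0<..1} g" and "\<eta> > 0"
  obtains xs where "decreasing_grid xs"
    "\<And>i y z. y \<in> {xs (Suc i)..xs i} \<Longrightarrow> z \<in> {xs (Suc i)..xs i} \<Longrightarrow> \<bar>g y - g z\<bar> < \<eta>"
proof -
  obtain d where d_pos: "\<And>k. d k > 0"
    and d: "\<And>k y z. y \<in> {(1/2::real)^k..1} \<Longrightarrow> z \<in> {(1/2::real)^k..1} \<Longrightarrow> \<bar>y - z\<bar> < d k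
      \<Longrightarrow> \<bar>g y - g z\<bar> < \<eta>"
    using uniform_continuity_moduli_dyadic[OF assms] by blast
  define xs where "xs = grid_sequence d"
  interpret decreasing_grid xs
    unfolding xs_def using d_pos by (rule decreasing_grid_grid_sequence)
  have "\<bar>g y - g z\<bar> < \<eta>" if "y \<in> {xs (Suc i)..xs i}" "z \<in> {xs (Suc i)..xs i}" for i y z
  proof (rule d)
    let ?k = "dyadic_level (xs i)"
    have "(1/2)^?k \<le> xs i / 2"
      unfolding xs_def by (rule dyadic_level_le[OF grid_sequence_pos])
    also have "\<dots> \<le> xs (Suc i)"
      by (simp add: xs_def grid_sequence_Suc)
    finally have "(1/2)^?k \<le> xs (Suc i)" .
    moreover have "xs i \<le> 1"
      using xs_antimono[of 0 i] start by simp
    ultimately show "y \<in> {(1/2)^?k..1}" "z \<in> {(1/2)^?k..1}"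
      using that by auto
    show "\<bar>y - z\<bar> < d ?k"
      using that d_pos[of ?k] by (auto simp: xs_def grid_sequence_Suc)
  qed
  with decreasing_grid_axioms show ?thesis
    by (rule that)
qed

lemma smooth_cutoff_exists:
  fixes g :: "real \<Rightarrow> real"
  assumes cont: "continuous_on {0<..1} g" and "c < d"
  obtains \<phi> :: "real \<Rightarrow> real" where "smooth_on {0<..1} \<phi>" "\<And>x. \<phi> x \<in> {0..1}"
    "\<And>x. x \<in> {0<..1} \<Longrightarrow> d \<le> g x \<Longrightarrow> \<phi> x = 1"
    "\<And>x. x \<in> {0<..1} \<Longrightarrow> g x \<le> c \<Longrightarrow> \<phi> x = 0"
proof -
  obtain xs where "decreasing_grid xs"
    and oscillation: "\<And>i y z. y \<in> {xs (Suc i)..xs i} \<Longrightarrow> z \<in> {xs (Suc i)..xs i} \<Longrightarrow>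
      \<bar>g y - g z\<bar> < (d - c) / 2"
    using fine_grid_exists[OF cont, of "(d - c) / 2"] \<open>c < d\<close> by auto
  interpret decreasing_grid xs by fact
  define v where "v i = (if (c + d) / 2 \<le> g (xs i) then 1 else 0 :: real)" for i
  text \<open>The oscillation bound transfers \<open>g x \<ge> d\<close> (resp. \<open>g x \<le> c\<close>) to both ends of the cell of \<open>x\<close>.\<close>
  have ends: "\<bar>g x - g (xs (cell x))\<bar> < (d - c) / 2" "\<bar>g x - g (xs (Suc (cell x)))\<bar> < (d - c) / 2"
    if "x \<in> {0<..1}" for x
  proof -
    have "x \<in> {xs (Suc (cell x))..xs (cell x)}" "xs (cell x) \<in> {xs (Suc (cell x))..xs (cell x)}"
      "xs (Suc (cell x)) \<in> {xs (Suc (cell x))..xs (cell x)}"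
      using cell_bounds[OF that] decreasing[of "cell x"] by auto
    then show "\<bar>g x - g (xs (cell x))\<bar> < (d - c) / 2" "\<bar>g x - g (xs (Suc (cell x)))\<bar> < (d - c) / 2"
      by (simp_all only: oscillation)
  qed
  show ?thesis
  proof
    show "smooth_on {0<..1} (interpolate v)"
      by (rule smooth_on_interpolate)
    show "interpolate v x \<in> {0..1}" for x
      by (rule interpolate_bounds) (simp add: v_def)
    show "interpolate v x = 1" if "x \<in> {0<..1}" "d \<le> g x" for x
      using ends[OF that(1)] that(2) unfolding abs_less_iff by (intro interpolate_eq_const) (auto simp: v_def)
    show "interpolate v x = 0" if "x \<in> {0<..1}" "g x \<le> c" for x
      using ends[OF that(1)] that(2) unfolding abs_less_iff by (intro interpolate_eq_const) (auto simp: v_def)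
  qed
qed

text \<open>A cutoff vanishing wherever \<open>\<parallel>f\<parallel> \<le> c\<close> removes the zeros of \<open>f\<close>: by continuity it vanishes
  on a neighbourhood of each of them.\<close>

lemma smooth_on_cutoff_divide:
  fixes f :: "real \<Rightarrow> 'a::real_normed_field" and \<phi> :: "real \<Rightarrow> real"
  assumes nontrivial: "\<And>x. x \<in> S \<Longrightarrow> at x within S \<noteq> bot"
    and f: "smooth_on S f" and \<phi>: "smooth_on S \<phi>" and "c > 0"
    and vanish: "\<And>x. x \<in> S \<Longrightarrow> norm (f x) \<le> c \<Longrightarrow> \<phi> x = 0"
  shows "smooth_on S (\<lambda>x. of_real (\<phi> x) / f x)"
proof (rule smooth_on_local[OF nontrivial])
  fix x assume "x \<in> S"
  have cont: "continuous_on S f"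
    by (rule smooth_on_imp_continuous_on[OF f])
  show "\<exists>U. open U \<and> x \<in> U \<and> smooth_on (U \<inter> S) (\<lambda>x. of_real (\<phi> x) / f x)"
  proof (cases "norm (f x) < c")
    case True
    then obtain \<delta> where "\<delta> > 0" and near: "\<And>y. y \<in> S \<Longrightarrow> dist y x < \<delta> \<Longrightarrow> dist (f y) (f x) < c - norm (f x)"
      using cont \<open>x \<in> S\<close> unfolding continuous_on_iff by (metis diff_gt_0_iff_gt)
    have "norm (f y) \<le> c" if "y \<in> ball x \<delta> \<inter> S" for y
    proof -
      have "dist (f y) (f x) < c - norm (f x)"
        using that by (intro near) (auto simp: dist_commute)
      then show ?thesis
        using norm_triangle_ineq2[of "f y" "f x"] unfolding dist_norm by linarith
    qed
    then have "smooth_on (ball x \<delta> \<inter> S) (\<lambda>x. of_real (\<phi> x) / f x)"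
      by (intro smooth_on_cong[OF smooth_on_const[where c = 0]]) (simp add: vanish)
    then show ?thesis
      using \<open>\<delta> > 0\<close> by (intro exI[of _ "ball x \<delta>"]) simp
  next
    case False
    then obtain \<delta> where "\<delta> > 0" and near: "\<And>y. y \<in> S \<Longrightarrow> dist y x < \<delta> \<Longrightarrow> dist (f y) (f x) < norm (f x)"
      using cont \<open>x \<in> S\<close> \<open>c > 0\<close> unfolding continuous_on_iff by (metis not_less order.strict_trans2)
    have "f y \<noteq> 0" if "y \<in> ball x \<delta> \<inter> S" for y
      using near[of y] that by (auto simp: dist_commute)
    then have "smooth_on (ball x \<delta> \<inter> S) (\<lambda>x. of_real (\<phi> x) * inverse (f x))"
      by (intro smooth_on_mult smooth_on_of_real smooth_on_inverse smooth_on_subset[OF \<phi>]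
          smooth_on_subset[OF f]) auto
    then show ?thesis
      using \<open>\<delta> > 0\<close> by (intro exI[of _ "ball x \<delta>"]) (simp add: divide_inverse)
  qed
qed

lemma norm_cutoff_divide_le:
  fixes y :: "'a::real_normed_field"
  assumes "c > 0" "\<bar>p\<bar> \<le> 1" and "norm y \<le> c \<Longrightarrow> p = 0"
  shows "norm (of_real p / y) \<le> 1 / c"
proof (cases "norm y \<le> c")
  case False
  then have "norm (of_real p / y) \<le> 1 / norm y"
    using assms(2) by (simp add: norm_divide divide_right_mono)
  also have "\<dots> \<le> 1 / c"
    using False \<open>c > 0\<close> by (simp add: frac_le)
  finally show ?thesis .
qed (use assms in simp)

lemma norm_gelfand_product_le:
  fixes A B :: "'a::real_normed_field" and p q :: real
  assumes "p \<in> {0..1}"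
    and p: "4/10 \<le> norm A \<Longrightarrow> p = 1" and q: "norm A \<le> 5/10 \<Longrightarrow> q = 0"
  shows "norm ((1 + A * (of_real (- p) / A)) * (1 + B * (of_real (q - 1) / (1 - A))))
    \<le> 2 * norm (A + B - 1)"
proof (cases "4/10 \<le> norm A")
  case True
  then have "A \<noteq> 0" by auto
  with p[OF True] show ?thesis by simp
next
  case False
  have "1 + A * (of_real (- p) / A) = of_real (if A = 0 then 1 else 1 - p)"
    by simp
  then have first: "norm (1 + A * (of_real (- p) / A)) \<le> 1"
    using assms(1) by (simp only: norm_of_real) auto
  have "6/10 \<le> norm (1 - A)"
    using False norm_triangle_ineq2[of 1 A] by simp
  then have "1 - A \<noteq> 0"
    by auto
  with q False have "1 + B * (of_real (q - 1) / (1 - A)) = - (A + B - 1) / (1 - A)"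
    by (simp add: field_simps)
  then have "norm (1 + B * (of_real (q - 1) / (1 - A))) = norm (A + B - 1) / norm (1 - A)"
    by (simp only: norm_divide norm_minus_cancel)
  also have "\<dots> \<le> norm (A + B - 1) / (6/10)"
    using \<open>6/10 \<le> norm (1 - A)\<close> by (intro divide_left_mono) auto
  also have "\<dots> \<le> 2 * norm (A + B - 1)"
    by simp
  finally have second: "norm (1 + B * (of_real (q - 1) / (1 - A))) \<le> 2 * norm (A + B - 1)" .
  show ?thesis
    using mult_mono[OF first second] by (simp add: norm_mult)
qed

lemma bounded_smooth_in_E_M_sm:
  assumes "smooth_on {0<..1} f" and "\<And>x. x \<in> {0<..1} \<Longrightarrow> norm (f x) \<le> B"
  shows "f \<in> E_M_sm"
  using assms unfolding E_M_sm_def smooth_on_I_iff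
  by (intro CollectI conjI exI[of _ 0] exI[of _ B] exI[of _ 1]) auto

lemma smooth_dominated_by_N_sm:
  assumes "g \<in> N_sm" "smooth_on {0<..1} f" "K \<ge> 0"
    and "\<And>x. x \<in> {0<..1} \<Longrightarrow> norm (f x) \<le> K * norm (g x)"
  shows "f \<in> N_sm"
  unfolding N_sm_def smooth_on_I_iff
proof (intro CollectI conjI allI)
  fix m :: nat
  obtain C \<epsilon>0 where "\<epsilon>0 > 0"
    and C: "\<forall>\<epsilon>. 0 < \<epsilon> \<and> \<epsilon> \<le> \<epsilon>0 \<and> \<epsilon> \<le> 1 \<longrightarrow> norm (g \<epsilon>) \<le> C * \<epsilon> ^ m"
    using \<open>g \<in> N_sm\<close> unfolding N_sm_def by blast
  have "norm (f \<epsilon>) \<le> (K * C) * \<epsilon> ^ m" if "0 < \<epsilon> \<and> \<epsilon> \<le> \<epsilon>0 \<and> \<epsilon> \<le> 1" for \<epsilon>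
    using assms(4)[of \<epsilon>] mult_left_mono[OF C[rule_format, OF that] \<open>K \<ge> 0\<close>] that
    by (simp add: mult.assoc)
  then show "\<exists>C \<epsilon>0. \<epsilon>0 > 0 \<and> (\<forall>\<epsilon>. 0 < \<epsilon> \<and> \<epsilon> \<le> \<epsilon>0 \<and> \<epsilon> \<le> 1 \<longrightarrow> norm (f \<epsilon>) \<le> C * \<epsilon> ^ m)"
    using \<open>\<epsilon>0 > 0\<close> by blast
qed (fact assms(2))

lemma cutoff_divide_in_E_M_sm:
  fixes f :: "real \<Rightarrow> 'a::real_normed_field" and \<phi> :: "real \<Rightarrow> real"
  assumes "smooth_on {0<..1} f" "smooth_on {0<..1} \<phi>" "c > 0"
    and "\<And>x. x \<in> {0<..1} \<Longrightarrow> \<bar>\<phi> x\<bar> \<le> 1"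
    and "\<And>x. x \<in> {0<..1} \<Longrightarrow> norm (f x) \<le> c \<Longrightarrow> \<phi> x = 0"
  shows "(\<lambda>x. of_real (\<phi> x) / f x) \<in> E_M_sm"
  using assms
  by (intro bounded_smooth_in_E_M_sm[where B = "1 / c"] smooth_on_cutoff_divide norm_cutoff_divide_le
      at_within_Ioc_nontrivial) auto

lemma gelfand_multipliers_exist:
  fixes a :: "real \<Rightarrow> 'a::real_normed_field"
  assumes a: "smooth_on {0<..1} a"
  obtains r s where "r \<in> E_M_sm" "s \<in> E_M_sm"
    "\<And>x y. x \<in> {0<..1} \<Longrightarrow> norm ((1 + a x * r x) * (1 + y * s x)) \<le> 2 * norm (a x + y - 1)"
proof -
  have cont: "continuous_on {0<..1} (\<lambda>x. norm (a x))"
    by (intro continuous_on_norm smooth_on_imp_continuous_on a)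
  obtain \<phi> :: "real \<Rightarrow> real" where \<phi>: "smooth_on {0<..1} \<phi>" "\<And>x. \<phi> x \<in> {0..1}"
      "\<And>x. x \<in> {0<..1} \<Longrightarrow> 4/10 \<le> norm (a x) \<Longrightarrow> \<phi> x = 1"
      "\<And>x. x \<in> {0<..1} \<Longrightarrow> norm (a x) \<le> 3/10 \<Longrightarrow> \<phi> x = 0"
    by (rule smooth_cutoff_exists[OF cont, of "3/10" "4/10"]) auto
  obtain \<psi> :: "real \<Rightarrow> real" where \<psi>: "smooth_on {0<..1} \<psi>" "\<And>x. \<psi> x \<in> {0..1}"
      "\<And>x. x \<in> {0<..1} \<Longrightarrow> 6/10 \<le> norm (a x) \<Longrightarrow> \<psi> x = 1"
      "\<And>x. x \<in> {0<..1} \<Longrightarrow> norm (a x) \<le> 5/10 \<Longrightarrow> \<psi> x = 0"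
    by (rule smooth_cutoff_exists[OF cont, of "5/10" "6/10"]) auto
  show ?thesis
  proof
    show "(\<lambda>x. of_real (- \<phi> x) / a x) \<in> E_M_sm"
      using \<phi> by (intro cutoff_divide_in_E_M_sm[where c = "3/10"] smooth_on_minus a) auto
    show "(\<lambda>x. of_real (\<psi> x - 1) / (1 - a x)) \<in> E_M_sm"
    proof (intro cutoff_divide_in_E_M_sm[where c = "4/10"] smooth_on_diff smooth_on_const a \<psi>(1))
      fix x :: real assume x: "x \<in> {0<..1}"
      show "\<bar>\<psi> x - 1\<bar> \<le> 1"
        using \<psi>(2)[of x] by auto
      assume "norm (1 - a x) \<le> 4/10"
      then have "6/10 \<le> norm (a x)"
        using norm_triangle_ineq2[of 1 "a x"] by simp
      then show "\<psi> x - 1 = 0"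
        using \<psi>(3) x by simp
    qed simp
    show "norm ((1 + a x * (of_real (- \<phi> x) / a x)) * (1 + y * (of_real (\<psi> x - 1) / (1 - a x))))
        \<le> 2 * norm (a x + y - 1)" if "x \<in> {0<..1}" for x y
      using \<phi>(2,3) \<psi>(4) that by (intro norm_gelfand_product_le) auto
  qed
qed

theorem lemma4p5:
  fixes a b :: "real \<Rightarrow> 'a::real_normed_field"
  assumes "a \<in> E_M_sm" and "b \<in> E_M_sm"
    and "(\<lambda>\<epsilon>. a \<epsilon> + b \<epsilon> - 1) \<in> N_sm"
  shows "\<exists>r s. r \<in> E_M_sm \<and> s \<in> E_M_sm \<and>
           (\<lambda>\<epsilon>. (1 + a \<epsilon> * r \<epsilon>) * (1 + b \<epsilon> * s \<epsilon>)) \<in> N_sm"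
proof -
  have a: "smooth_on {0<..1} a" and b: "smooth_on {0<..1} b"
    using assms(1,2) by (simp_all add: E_M_sm_def smooth_on_I_iff)
  obtain r s where r: "r \<in> E_M_sm" and s: "s \<in> E_M_sm"
    and bound: "\<And>x y. x \<in> {0<..1} \<Longrightarrow> norm ((1 + a x * r x) * (1 + y * s x)) \<le> 2 * norm (a x + y - 1)"
    using gelfand_multipliers_exist[OF a] by blast
  have "(\<lambda>\<epsilon>. (1 + a \<epsilon> * r \<epsilon>) * (1 + b \<epsilon> * s \<epsilon>)) \<in> N_sm"
    using assms(3)
  proof (rule smooth_dominated_by_N_sm[where K = 2])
    show "smooth_on {0<..1} (\<lambda>\<epsilon>. (1 + a \<epsilon> * r \<epsilon>) * (1 + b \<epsilon> * s \<epsilon>))"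
      using r s a b unfolding E_M_sm_def smooth_on_I_iff
      by (intro smooth_on_mult smooth_on_add smooth_on_const) auto
  qed (simp_all add: bound)
  with r s show ?thesis
    by blast
qed

end
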